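(* Let $X$ be a non-negative random variable with CDF $F$ which is DDA, i.e. its quantile function $F^{-1}$ is star-shaped: $p\mapsto F^{-1}(p)/p$ is increasing on $(0,1)$. Let $1\le i\le n$ and $1\le j\le m$ be integers and define, for $x\in[0,1]$, $$Z(x)=\frac{i}{n+1}\left(1-F_{B_{i+1:n+1}}(x)\right)-\frac{j}{m+1}\left(1-F_{B_{j+1:m+1}}(x)\right),$$ where $F_{B_{k:N}}$ denotes the CDF of the $\mathrm{beta}(k,N-k+1)$ distribution. Let $R$ be the set of solutions $x\in(0,1)$ of the equation $$x^{\,i-j}(1-x)^{(n-i)-(m-j)}=\frac{\mathcal{B}(i,n-i+1)}{\mathcal{B}(j,m-j+1)},$$ where $\mathcal{B}$ is the beta function. If $Z(r)\geq 0$ for every $r\in R$, then $X_{i:n}\geq_{ss}X_{j:m}$.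
   Context: $F^{-1}(p)=\inf\{x:F(x)\ge p\}$. $X_{k:N}$ is the $k$-th order statistic of an i.i.d. sample of size $N$ from $F$. A function $u:[0,\infty)\to[0,\infty)$ with $u(0)=0$ is star-shaped if $u(x)/x$ is increasing on $(0,\infty)$. For non-negative random variables $V,W$, $V\geq_{ss}W$ means $\mathbb{E}\,u(V)\geq\mathbb{E}\,u(W)$ for every star-shaped $u$ for which the expectations exist. "Increasing" means non-decreasing. *)

theory Defs
  imports "HOL-Probability.Probability"
begin

definition quantile :: "(real \<Rightarrow> real) \<Rightarrow> real \<Rightarrow> real" where
  "quantile F p = Inf {x. F x \<ge> p}"

definition DDA :: "(real \<Rightarrow> real) \<Rightarrow> bool" where
  "DDA F \<longleftrightarrow> (\<forall>p q. 0 < p \<and> p \<le> q \<and> q < 1 \<longrightarrow> quantile F p / p \<le> quantile F q / q)"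

definition star_shaped_fun :: "(real \<Rightarrow> real) \<Rightarrow> bool" where
  "star_shaped_fun u \<longleftrightarrow> u 0 = 0 \<and> (\<forall>x\<ge>0. u x \<ge> 0) \<and>
     (\<forall>x y. 0 < x \<and> x \<le> y \<longrightarrow> u x / x \<le> u y / y)"

(* V \<ge>_ss W, for the distributions V, W (measures on the reals) of non-negative r.v.s *)
definition ss_ge :: "real measure \<Rightarrow> real measure \<Rightarrow> bool" where
  "ss_ge V W \<longleftrightarrow> (\<forall>u. star_shaped_fun u \<and> integrable V u \<and> integrable W u \<longrightarrow>
      (\<integral>x. u x \<partial>V) \<ge> (\<integral>x. u x \<partial>W))"

(* k-th order statistic (k = 1..N) of the sample x 0, ..., x (N-1) *)
definition order_stat :: "nat \<Rightarrow> nat \<Rightarrow> (nat \<Rightarrow> real) \<Rightarrow> real" where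
  "order_stat k N x = sort (map x [0..<N]) ! (k - 1)"

(* distribution of X_{k:N} for an i.i.d. sample of size N from the law D *)
definition order_stat_distr :: "real measure \<Rightarrow> nat \<Rightarrow> nat \<Rightarrow> real measure" where
  "order_stat_distr D k N = distr (PiM {..<N} (\<lambda>_. D)) borel (order_stat k N)"

definition beta_cdf :: "real \<Rightarrow> real \<Rightarrow> real \<Rightarrow> real" where
  "beta_cdf a b x =
     (if x \<le> 0 then 0 else if x \<ge> 1 then 1 else
      (LBINT t=0..x. t powr (a - 1) * (1 - t) powr (b - 1)) / Beta a b)"

definition F_B :: "nat \<Rightarrow> nat \<Rightarrow> real \<Rightarrow> real" where
  "F_B k N x = beta_cdf (real k) (real N - real k + 1) x"

end

theory Submission
  imports Defs
begin

(* With Q the quantile function of F, the order statistic X_{k:N} has the law of Q(U_{k:N}) for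
   uniform order statistics U_{k:N}, whose density on (0,1) is beta_density k N.  For star-shaped u
   the function h p = u(Q p) / p is nonnegative and increasing, because u(Q p) / Q p and Q p / p
   both are (the latter is the DDA property); hence E u(X_{k:N}) = \<integral> p h(p) beta_density k N p dp.
   By the layer-cake formula it suffices to compare these integrals over upper intervals (x,1),
   where they are the partial means i/(n+1) (1 - F_{B_{i+1:n+1}}(x)) whose difference is Z.
   Z vanishes at 1 and Z' x = x (beta_density j m x - beta_density i n x) vanishes in (0,1) exactly
   on R, so a minimum argument shows that Z \<ge> 0 on R forces Z \<ge> 0 on [0,1]. *)

(* binomial_tail k N x = P(Bin(N, x) \<ge> k) is the CDF of the k-th order statistic of N uniforms,
   beta_density k N its density, and upper_partial_mean k N x = \<integral>_x^1 p * beta_density k N p dp.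
   The function Z of the theorem is upper_partial_mean i n - upper_partial_mean j m. *)
definition binomial_tail :: "nat \<Rightarrow> nat \<Rightarrow> real \<Rightarrow> real" where
  "binomial_tail k N x = (\<Sum>l=k..N. real (N choose l) * x ^ l * (1 - x) ^ (N - l))"

definition beta_density :: "nat \<Rightarrow> nat \<Rightarrow> real \<Rightarrow> real" where
  "beta_density k N x = real (N choose k) * real k * x ^ (k - 1) * (1 - x) ^ (N - k)"

definition upper_partial_mean :: "nat \<Rightarrow> nat \<Rightarrow> real \<Rightarrow> real" where
  "upper_partial_mean k N x = real k / real (N + 1) * (1 - binomial_tail (Suc k) (Suc N) x)"

lemma binomial_tail_0: "1 \<le> k \<Longrightarrow> binomial_tail k N 0 = 0"
  by (auto simp: binomial_tail_def intro!: sum.neutral)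

lemma binomial_tail_1:
  assumes "k \<le> N"
  shows "binomial_tail k N 1 = 1"
proof -
  have "binomial_tail k N 1 = (\<Sum>l=k..N. if l = N then 1 else 0)"
    unfolding binomial_tail_def by (intro sum.cong) auto
  then show ?thesis using assms by simp
qed

lemma binomial_tail_nonneg: "0 \<le> x \<Longrightarrow> x \<le> 1 \<Longrightarrow> 0 \<le> binomial_tail k N x"
  unfolding binomial_tail_def by (intro sum_nonneg) auto

lemma beta_density_nonneg: "0 \<le> x \<Longrightarrow> x \<le> 1 \<Longrightarrow> 0 \<le> beta_density k N x"
  by (simp add: beta_density_def)

lemma isCont_beta_density: "isCont (beta_density k N) x"
  unfolding beta_density_def by (intro continuous_intros)

lemma borel_measurable_beta_density [measurable]: "beta_density k N \<in> borel_measurable borel"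
  unfolding beta_density_def by measurable

(* The derivative telescopes: d/dx of the l-th Bernstein term is the difference of the
   densities for l and l+1. *)
lemma has_real_derivative_binomial_tail:
  assumes "1 \<le> k" "k \<le> N"
  shows "(binomial_tail k N has_real_derivative beta_density k N x) (at x)"
  using assms
proof (induction "N - k" arbitrary: k)
  case 0
  then have "binomial_tail k N = (\<lambda>x. x ^ N)" by (auto simp: binomial_tail_def fun_eq_iff)
  moreover have "((\<lambda>x. x ^ N) has_real_derivative real N * x ^ (N - 1)) (at x)"
    by (rule derivative_eq_intros refl)+ simp
  ultimately show ?case using 0 by (simp add: beta_density_def)
next
  case (Suc d)
  then have "k < N" by simp
  then obtain e where e: "N - k = Suc e" by (metis Suc_diff_Suc)
  have tail: "binomial_tail k N
      = (\<lambda>x. real (N choose k) * x ^ k * (1 - x) ^ (N - k) + binomial_tail (Suc k) N x)"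
    using \<open>k < N\<close> by (auto simp: binomial_tail_def fun_eq_iff sum.atLeast_Suc_atMost)
  have bernstein_term: "((\<lambda>x. real (N choose k) * x ^ k * (1 - x) ^ (N - k)) has_real_derivative
      real (N choose k) * real k * x ^ (k - 1) * (1 - x) ^ (N - k)
      - real (N choose k) * real (N - k) * x ^ k * (1 - x) ^ e) (at x)"
    by (rule derivative_eq_intros refl)+ (simp add: e algebra_simps)
  have choose_eq: "real (N choose k) * real (N - k) = real (N choose Suc k) * real (Suc k)"
    by (metis binomial_absorb_comp binomial_absorption mult.commute of_nat_mult)
  have "N - Suc k = e" using e by simp
  then have "beta_density (Suc k) N x = real (N choose k) * real (N - k) * x ^ k * (1 - x) ^ e"
    unfolding beta_density_def choose_eq by simp
  then have sum_eq: "real (N choose k) * real k * x ^ (k - 1) * (1 - x) ^ (N - k)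
      - real (N choose k) * real (N - k) * x ^ k * (1 - x) ^ e + beta_density (Suc k) N x
      = beta_density k N x"
    by (simp add: beta_density_def)
  have "(binomial_tail (Suc k) N has_real_derivative beta_density (Suc k) N x) (at x)"
    using Suc by simp
  from DERIV_add[OF bernstein_term this] show ?case
    unfolding tail sum_eq .
qed

lemma beta_density_Suc:
  assumes "1 \<le> k" "k \<le> N"
  shows "real k / real (N + 1) * beta_density (Suc k) (Suc N) x = x * beta_density k N x"
proof -
  obtain k' where k': "k = Suc k'" using assms by (cases k) auto
  have "real (Suc N choose Suc k) * real (Suc k) = real (Suc N) * real (N choose k)"
    by (metis Suc_times_binomial of_nat_mult mult.commute)
  then have "beta_density (Suc k) (Suc N) x = real (Suc N) * real (N choose k) * x ^ k * (1 - x) ^ (N - k)"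
    by (simp add: beta_density_def)
  moreover have "x * beta_density k N x = real (N choose k) * real k * x ^ k * (1 - x) ^ (N - k)"
    unfolding beta_density_def k' by (simp add: algebra_simps)
  ultimately show ?thesis by (simp add: field_simps)
qed

lemma has_real_derivative_upper_partial_mean:
  assumes "1 \<le> k" "k \<le> N"
  shows "(upper_partial_mean k N has_real_derivative - x * beta_density k N x) (at x)"
proof -
  have "(upper_partial_mean k N has_real_derivative
      real k / real (N + 1) * (0 - beta_density (Suc k) (Suc N) x)) (at x)"
    unfolding upper_partial_mean_def[abs_def]
    using assms by (intro DERIV_cmult DERIV_diff DERIV_const has_real_derivative_binomial_tail) auto
  then show ?thesis using beta_density_Suc[OF assms] by simp
qed

lemma upper_partial_mean_0: "1 \<le> k \<Longrightarrow> upper_partial_mean k N 0 = real k / real (N + 1)"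
  by (simp add: upper_partial_mean_def binomial_tail_0)

lemma upper_partial_mean_1: "k \<le> N \<Longrightarrow> upper_partial_mean k N 1 = 0"
  by (simp add: upper_partial_mean_def binomial_tail_1)

lemma Beta_of_nat:
  assumes "1 \<le> k" "k \<le> N"
  shows "Beta (real k) (real N - real k + 1) = 1 / (real (N choose k) * real k)"
proof -
  have "Gamma (real k) = fact (k - 1)"
    using assms Gamma_fact[of "k - 1"] by (simp add: of_nat_diff)
  moreover have "Gamma (real N - real k + 1) = fact (N - k)"
    using assms Gamma_fact[of "N - k"] by (simp add: of_nat_diff add.commute)
  moreover have "Gamma (real k + (real N - real k + 1)) = fact N"
    using Gamma_fact[of N] by (simp add: add.commute)
  moreover have "real (N choose k) = fact N / (fact k * fact (N - k))"
    using assms by (simp add: binomial_fact)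
  moreover have "(fact k :: real) = real k * fact (k - 1)"
    using assms by (metis fact_num_eq_if One_nat_def not_one_le_zero)
  ultimately show ?thesis
    unfolding Beta_def using assms by (simp add: field_simps)
qed

lemma beta_cdf_eq_binomial_tail:
  assumes k: "1 \<le> k" "k \<le> N" and x: "0 \<le> x" "x \<le> 1"
  shows "beta_cdf (real k) (real N - real k + 1) x = binomial_tail k N x"
proof -
  consider "x = 0" | "x = 1" | "0 < x" "x < 1" using x by linarith
  then show ?thesis
  proof cases
    case 3
    define c where "c = real (N choose k) * real k"
    have "c > 0" using k by (simp add: c_def)
    have "(LBINT t=0..x. t powr (real k - 1) * (1 - t) powr (real N - real k + 1 - 1))
        = (LBINT t=0..x. t ^ (k - 1) * (1 - t) ^ (N - k))"
    proof (rule interval_integral_cong, goal_cases)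
      case (1 t)
      then have "0 < t" "t < 1"
        using 3 by (auto simp: einterval_def min_def max_def split: if_splits)
      moreover have "real k - 1 = real (k - 1)" "real N - real k + 1 - 1 = real (N - k)"
        using k by (auto simp: of_nat_diff)
      ultimately show ?case
        by (simp only: powr_realpow diff_gt_0_iff_gt)
    qed
    also have "\<dots> = (LBINT t=ereal 0..ereal x. t ^ (k - 1) * (1 - t) ^ (N - k))"
      by (simp add: zero_ereal_def)
    also have "\<dots> = binomial_tail k N x / c - binomial_tail k N 0 / c"
    proof (rule interval_integral_FTC_finite)
      show "continuous_on {min 0 x..max 0 x} (\<lambda>t. t ^ (k - 1) * (1 - t) ^ (N - k))"
        by (intro continuous_intros)
      fix t
      have "((\<lambda>t. binomial_tail k N t / c) has_real_derivative beta_density k N t / c) (at t)"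
        using has_real_derivative_binomial_tail[OF k] by (rule DERIV_cdivide)
      moreover have "beta_density k N t / c = t ^ (k - 1) * (1 - t) ^ (N - k)"
        using \<open>c > 0\<close> k by (simp add: beta_density_def c_def)
      ultimately show "((\<lambda>t. binomial_tail k N t / c) has_vector_derivative
          t ^ (k - 1) * (1 - t) ^ (N - k)) (at t within {min 0 x..max 0 x})"
        by (simp add: has_real_derivative_iff_has_vector_derivative[symmetric]
            has_field_derivative_at_within)
    qed
    finally show ?thesis
      using 3 k Beta_of_nat[OF k] \<open>c > 0\<close> binomial_tail_0[OF k(1)]
      by (simp add: beta_cdf_def c_def)
  qed (use k in \<open>auto simp: beta_cdf_def binomial_tail_0 binomial_tail_1\<close>)
qed

lemma F_B_Suc_eq_binomial_tail:
  "1 \<le> k \<Longrightarrow> k \<le> N \<Longrightarrow> 0 \<le> x \<Longrightarrow> x \<le> 1 \<Longrightarrow> F_B (Suc k) (Suc N) x = binomial_tail (Suc k) (Suc N) x"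
  unfolding F_B_def using beta_cdf_eq_binomial_tail[of "Suc k" "Suc N" x] by simp

lemma beta_density_eq_iff_Beta_ratio:
  assumes ij: "1 \<le> i" "i \<le> n" "1 \<le> j" "j \<le> m" and r: "0 < r" "r < 1"
  shows "beta_density i n r = beta_density j m r \<longleftrightarrow>
    r powr (real i - real j) * (1 - r) powr ((real n - real i) - (real m - real j))
      = Beta (real i) (real n - real i + 1) / Beta (real j) (real m - real j + 1)"
proof -
  define ci where "ci = real (n choose i) * real i"
  define cj where "cj = real (m choose j) * real j"
  define A where "A = r ^ (i - 1) * (1 - r) ^ (n - i)"
  define B where "B = r ^ (j - 1) * (1 - r) ^ (m - j)"
  have pos: "ci > 0" "cj > 0" "B > 0" using ij r by (auto simp: ci_def cj_def B_def)
  have "real i - real j = real (i - 1) - real (j - 1)"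
    "(real n - real i) - (real m - real j) = real (n - i) - real (m - j)"
    using ij by (auto simp: of_nat_diff)
  then have "r powr (real i - real j) * (1 - r) powr ((real n - real i) - (real m - real j)) = A / B"
    using r by (simp add: powr_diff powr_realpow A_def B_def)
  moreover have "Beta (real i) (real n - real i + 1) / Beta (real j) (real m - real j + 1) = cj / ci"
    using Beta_of_nat[of i n] Beta_of_nat[of j m] ij pos by (simp add: ci_def cj_def)
  moreover have "beta_density i n r = ci * A" "beta_density j m r = cj * B"
    by (simp_all add: beta_density_def ci_def cj_def A_def B_def mult.assoc)
  moreover have "A / B = cj / ci \<longleftrightarrow> ci * A = cj * B"
    using pos by (simp add: field_simps)
  ultimately show ?thesis by simp
qed

lemma eventually_power_dominated_at_right_0:
  fixes a b :: real
  assumes "k < l" "0 < a"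
  shows "\<forall>\<^sub>F x in at_right 0. b * x ^ l * (1 - x) ^ s < a * x ^ k * (1 - x) ^ t"
proof -
  define g where "g x = a * (1 - x) ^ t - b * x ^ (l - k) * (1 - x) ^ s" for x :: real
  have "(g \<longlongrightarrow> g 0) (at_right 0)"
    unfolding g_def by (intro tendsto_intros)
  moreover have "g 0 = a" using assms by (simp add: g_def)
  ultimately have "\<forall>\<^sub>F x in at_right 0. 0 < g x"
    using assms by (auto dest: order_tendstoD)
  then show ?thesis
    using eventually_at_right_less[of 0]
  proof eventually_elim
    case (elim x)
    have "a * x ^ k * (1 - x) ^ t - b * x ^ l * (1 - x) ^ s = x ^ k * g x"
      using \<open>k < l\<close> by (simp add: g_def algebra_simps flip: power_add)
    then show ?case using elim by (simp add: algebra_simps)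
  qed
qed

lemma eventually_power_dominated_at_left_1:
  fixes a b :: real
  assumes "k < l" "0 < a"
  shows "\<forall>\<^sub>F x in at_left 1. b * x ^ s * (1 - x) ^ l < a * x ^ t * (1 - x) ^ k"
proof -
  have "\<forall>\<^sub>F y in at_right 0. b * y ^ l * (1 - y) ^ s < a * y ^ k * (1 - y) ^ t"
    by (rule eventually_power_dominated_at_right_0[OF assms])
  then show ?thesis
    unfolding eventually_at_left_to_right eventually_at_right_to_0[of _ "- 1"]
    by (simp add: algebra_simps)
qed

lemma beta_density_less_at_right_0:
  assumes "1 \<le> i" "i \<le> n" "i < j"
  shows "\<forall>\<^sub>F x in at_right 0. beta_density j m x < beta_density i n x"
  unfolding beta_density_def using assms
  by (intro eventually_power_dominated_at_right_0) auto

lemma beta_density_less_at_left_1: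
  assumes "1 \<le> j" "j \<le> m" "m - j < n - i"
  shows "\<forall>\<^sub>F x in at_left 1. beta_density i n x < beta_density j m x"
  unfolding beta_density_def using assms
  by (intro eventually_power_dominated_at_left_1) auto

(* Both densities integrate to 1 over [0,1], so one cannot dominate the other throughout. *)
lemma beta_density_sign_change:
  assumes ij: "1 \<le> i" "i \<le> n" "1 \<le> j" "j \<le> m" and "m - j < n - i"
  obtains b x where "0 < x" "x < b" "b < 1"
    "\<And>y. b < y \<Longrightarrow> y < 1 \<Longrightarrow> beta_density i n y < beta_density j m y"
    "beta_density j m x < beta_density i n x"
proof -
  obtain b0 where "b0 < 1" and above0: "\<And>y. b0 < y \<Longrightarrow> y < 1 \<Longrightarrow> beta_density i n y < beta_density j m y"
    using beta_density_less_at_left_1[OF ij(3,4) \<open>m - j < n - i\<close>]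
    unfolding eventually_at_left_field by blast
  define b where "b = max b0 (1 / 2)"
  have b: "0 < b" "b < 1" using \<open>b0 < 1\<close> by (auto simp: b_def)
  have above: "beta_density i n y < beta_density j m y" if "b < y" "y < 1" for y
    using that above0 by (simp add: b_def)
  define W where "W x = binomial_tail j m x - binomial_tail i n x" for x
  have W': "(W has_real_derivative beta_density j m x - beta_density i n x) (at x)" for x
    unfolding W_def[abs_def] using ij by (intro DERIV_diff has_real_derivative_binomial_tail)
  obtain z1 where z1: "0 < z1" "z1 < b" "W b - W 0 = b * (beta_density j m z1 - beta_density i n z1)"
    using MVT2[of 0 b W "\<lambda>x. beta_density j m x - beta_density i n x"] W' b by auto
  obtain z2 where z2: "b < z2" "z2 < 1" "W 1 - W b = (1 - b) * (beta_density j m z2 - beta_density i n z2)"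
    using MVT2[of b 1 W "\<lambda>x. beta_density j m x - beta_density i n x"] W' b by auto
  have "W 0 = 0" "W 1 = 0"
    using ij by (simp_all add: W_def binomial_tail_0 binomial_tail_1)
  moreover have "W 1 - W b > 0" using z2 above[of z2] b by simp
  ultimately have "b * (beta_density j m z1 - beta_density i n z1) < 0"
    using z1 by simp
  then have "beta_density j m z1 < beta_density i n z1"
    using b by (simp add: mult_less_0_iff)
  then show ?thesis using that z1 b above by blast
qed

lemma left_endpoint_is_min_if_negative:
  fixes Z Z' :: "real \<Rightarrow> real"
  assumes deriv: "\<And>x. (Z has_real_derivative Z' x) (at x)"
    and crit: "\<And>y. a < y \<Longrightarrow> y < c \<Longrightarrow> Z' y = 0 \<Longrightarrow> 0 \<le> Z y"
    and "0 \<le> Z c" "x \<in> {a..c}" "Z x < 0"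
  shows "\<forall>y\<in>{a..c}. Z a \<le> Z y"
proof -
  have "continuous_on {a..c} Z"
    using DERIV_isCont[OF deriv] by (simp add: continuous_at_imp_continuous_on)
  then obtain y where y: "y \<in> {a..c}" and min: "\<And>z. z \<in> {a..c} \<Longrightarrow> Z y \<le> Z z"
    using continuous_attains_inf[of "{a..c}" Z] \<open>x \<in> {a..c}\<close> by auto
  have "Z y < 0" using min[of x] assms by simp
  have "y = a"
  proof (rule ccontr)
    assume "y \<noteq> a"
    moreover have "y \<noteq> c" using \<open>Z y < 0\<close> \<open>0 \<le> Z c\<close> by auto
    ultimately have "a < y" "y < c" using y by auto
    then have "Z' y = 0"
    proof (intro DERIV_local_min[OF deriv])
      show "0 < min (y - a) (c - y)" using \<open>a < y\<close> \<open>y < c\<close> by simp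
      show "\<forall>z. \<bar>y - z\<bar> < min (y - a) (c - y) \<longrightarrow> Z y \<le> Z z"
        by (auto intro!: min simp: abs_if split: if_splits)
    qed
    then show False using crit[OF \<open>a < y\<close> \<open>y < c\<close>] \<open>Z y < 0\<close> by simp
  qed
  then show ?thesis using min by blast
qed

lemma exists_less_if_deriv_neg_at_right:
  fixes Z Z' :: "real \<Rightarrow> real"
  assumes deriv: "\<And>x. (Z has_real_derivative Z' x) (at x)"
    and "a < c" and neg: "\<forall>\<^sub>F x in at_right a. Z' x < 0"
  shows "\<exists>y\<in>{a<..c}. Z y < Z a"
proof -
  obtain b where "a < b" and b: "\<And>y. a < y \<Longrightarrow> y < b \<Longrightarrow> Z' y < 0"
    using neg unfolding eventually_at_right_field by blast
  define y where "y = (a + min b c) / 2"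
  have "a < y" "y \<le> c" "y < b" using \<open>a < b\<close> \<open>a < c\<close> unfolding y_def by (auto simp: min_def)
  have "Z y < Z a"
  proof (rule DERIV_neg_imp_decreasing_open[OF \<open>a < y\<close>])
    fix x assume "a < x" "x < y"
    then have "Z' x < 0" using b \<open>y < b\<close> by simp
    with deriv show "\<exists>l. (Z has_real_derivative l) (at x) \<and> l < 0" by blast
  next
    show "continuous_on {a..y} Z"
      using DERIV_isCont[OF deriv] by (simp add: continuous_at_imp_continuous_on)
  qed
  then show ?thesis using \<open>a < y\<close> \<open>y \<le> c\<close> by auto
qed

lemma nonneg_if_nonneg_at_endpoints_and_critical_points:
  fixes Z Z' :: "real \<Rightarrow> real"
  assumes deriv: "\<And>x. (Z has_real_derivative Z' x) (at x)"
    and crit: "\<And>y. a < y \<Longrightarrow> y < c \<Longrightarrow> Z' y = 0 \<Longrightarrow> 0 \<le> Z y"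
    and "0 \<le> Z a" "0 \<le> Z c" "x \<in> {a..c}"
  shows "0 \<le> Z x"
proof (rule ccontr)
  assume "\<not> 0 \<le> Z x"
  then have "Z x < 0" by simp
  with left_endpoint_is_min_if_negative[OF deriv crit \<open>0 \<le> Z c\<close> \<open>x \<in> {a..c}\<close>] \<open>x \<in> {a..c}\<close>
  have "Z a \<le> Z x" by blast
  then show False using \<open>Z x < 0\<close> \<open>0 \<le> Z a\<close> by simp
qed

lemma nonneg_if_decreasing_at_left_endpoint:
  fixes Z Z' :: "real \<Rightarrow> real"
  assumes deriv: "\<And>x. (Z has_real_derivative Z' x) (at x)"
    and crit: "\<And>y. a < y \<Longrightarrow> y < c \<Longrightarrow> Z' y = 0 \<Longrightarrow> 0 \<le> Z y"
    and "a < c" "0 \<le> Z c" and dec: "\<forall>\<^sub>F y in at_right a. Z' y < 0" and "x \<in> {a..c}"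
  shows "0 \<le> Z x"
proof (rule ccontr)
  assume "\<not> 0 \<le> Z x"
  then have "Z x < 0" by simp
  with left_endpoint_is_min_if_negative[OF deriv crit \<open>0 \<le> Z c\<close> \<open>x \<in> {a..c}\<close>]
  have min: "\<forall>y\<in>{a..c}. Z a \<le> Z y" by blast
  obtain y where "y \<in> {a<..c}" "Z y < Z a"
    using exists_less_if_deriv_neg_at_right[OF deriv \<open>a < c\<close> dec] by auto
  moreover have "Z a \<le> Z y" using min \<open>y \<in> {a<..c}\<close> by simp
  ultimately show False by simp
qed

lemma has_real_derivative_upper_partial_mean_diff:
  assumes "1 \<le> i" "i \<le> n" "1 \<le> j" "j \<le> m"
  shows "((\<lambda>x. upper_partial_mean i n x - upper_partial_mean j m x) has_real_derivative
    x * (beta_density j m x - beta_density i n x)) (at x)"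
proof -
  have "((\<lambda>x. upper_partial_mean i n x - upper_partial_mean j m x) has_real_derivative
      - x * beta_density i n x - - x * beta_density j m x) (at x)"
    using assms by (intro DERIV_diff has_real_derivative_upper_partial_mean)
  then show ?thesis by (simp add: algebra_simps)
qed

lemma upper_partial_mean_0_le:
  assumes "1 \<le> i" "i \<le> n" "1 \<le> j" "j \<le> m" "j \<le> i" "n - i \<le> m - j"
  shows "upper_partial_mean j m 0 \<le> upper_partial_mean i n 0"
proof -
  have "real n - real i \<le> real m - real j" using assms by (simp add: of_nat_diff)
  have "real j * real (n + 1) = real j * (real n - real i + 1) + real j * real i"
    by (simp add: algebra_simps)
  also have "\<dots> \<le> real i * (real n - real i + 1) + real j * real i"
    using assms by (intro add_mono mult_right_mono) auto
  also have "\<dots> \<le> real i * (real m - real j + 1) + real i * real j"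
    using \<open>real n - real i \<le> real m - real j\<close> by (intro add_mono mult_left_mono) auto
  also have "\<dots> = real i * real (m + 1)" by (simp add: algebra_simps)
  finally show ?thesis
    using assms by (simp add: upper_partial_mean_0 field_simps)
qed

(* Z increases to Z 1 = 0 near 1, so Z b < 0 for some b; yet Z is decreasing at a sign change
   x1 < b of the densities, so nonnegativity at the crossings would give Z \<ge> 0 on [x1, 1]. *)
lemma upper_partial_mean_less_at_some_crossing:
  assumes ij: "1 \<le> i" "i \<le> n" "1 \<le> j" "j \<le> m" and "m - j < n - i"
  shows "\<exists>r. 0 < r \<and> r < 1 \<and> beta_density i n r = beta_density j m r \<and>
    upper_partial_mean i n r < upper_partial_mean j m r"
proof (rule ccontr)
  define Z where "Z y = upper_partial_mean i n y - upper_partial_mean j m y" for y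
  define D where "D y = beta_density j m y - beta_density i n y" for y
  have deriv: "(Z has_real_derivative y * D y) (at y)" for y
    unfolding Z_def[abs_def] D_def using has_real_derivative_upper_partial_mean_diff[OF ij] .
  assume no_crossing: "\<not> ?thesis"
  have crit: "0 \<le> Z y" if "0 < y" "y < 1" "y * D y = 0" for y
  proof -
    have "beta_density i n y = beta_density j m y" using that by (simp add: D_def)
    then show ?thesis using no_crossing that(1,2) by (auto simp: Z_def not_less)
  qed
  have "Z 1 = 0" using ij by (simp add: Z_def upper_partial_mean_1)
  obtain b x1 where "0 < x1" "x1 < b" "b < 1" "D x1 < 0"
    and above: "\<And>y. b < y \<Longrightarrow> y < 1 \<Longrightarrow> 0 < D y"
    using beta_density_sign_change[OF ij \<open>m - j < n - i\<close>] unfolding D_def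
    by (metis diff_gt_0_iff_gt diff_less_0_iff_less)
  have "Z b < Z 1"
  proof (rule DERIV_pos_imp_increasing_open[OF \<open>b < 1\<close>])
    fix y assume "b < y" "y < 1"
    then have "y * D y > 0" using above \<open>0 < x1\<close> \<open>x1 < b\<close> by simp
    with deriv show "\<exists>l. (Z has_real_derivative l) (at y) \<and> l > 0" by blast
  next
    show "continuous_on {b..1} Z"
      using DERIV_isCont[OF deriv] by (simp add: continuous_at_imp_continuous_on)
  qed
  have "isCont (\<lambda>y. y * D y) x1"
    unfolding D_def by (intro continuous_intros isCont_beta_density)
  moreover have "x1 * D x1 < 0" using \<open>0 < x1\<close> \<open>D x1 < 0\<close> by (simp add: mult_pos_neg)
  ultimately have "\<forall>\<^sub>F y in at x1. y * D y < 0"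
    unfolding isCont_def by (rule order_tendstoD(2))
  then have "\<forall>\<^sub>F y in at_right x1. y * D y < 0"
    by (simp add: eventually_at_split)
  moreover have "0 \<le> Z y" if "x1 < y" "y < 1" "y * D y = 0" for y
    using crit that \<open>0 < x1\<close> by simp
  ultimately have "0 \<le> Z b"
    using nonneg_if_decreasing_at_left_endpoint[where a=x1 and c=1 and x=b, OF deriv]
      \<open>Z 1 = 0\<close> \<open>x1 < b\<close> \<open>b < 1\<close>
    by simp
  then show False using \<open>Z b < Z 1\<close> \<open>Z 1 = 0\<close> by simp
qed

(* Z vanishes at 1 and is nonnegative at its interior critical points, hence Z \<ge> 0 on [0, 1] as
   soon as Z is decreasing at 0 (when i < j) or Z 0 \<ge> 0. *)
lemma upper_partial_mean_le_if_le_at_crossings: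
  assumes ij: "1 \<le> i" "i \<le> n" "1 \<le> j" "j \<le> m"
    and crossings: "\<And>r. 0 < r \<Longrightarrow> r < 1 \<Longrightarrow> beta_density i n r = beta_density j m r \<Longrightarrow>
      upper_partial_mean j m r \<le> upper_partial_mean i n r"
    and x: "0 \<le> x" "x \<le> 1"
  shows "upper_partial_mean j m x \<le> upper_partial_mean i n x"
proof -
  define Z where "Z y = upper_partial_mean i n y - upper_partial_mean j m y" for y
  define D where "D y = beta_density j m y - beta_density i n y" for y
  have deriv: "(Z has_real_derivative y * D y) (at y)" for y
    unfolding Z_def[abs_def] D_def using has_real_derivative_upper_partial_mean_diff[OF ij] .
  have crit: "0 \<le> Z y" if "0 < y" "y < 1" "y * D y = 0" for y
    using that crossings[of y] by (simp add: Z_def D_def)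
  have "Z 1 = 0" using ij by (simp add: Z_def upper_partial_mean_1)
  consider "i < j" | "j \<le> i" "n - i \<le> m - j" | "m - j < n - i" by linarith
  then have "0 \<le> Z x"
  proof cases
    case 1
    have "\<forall>\<^sub>F y in at_right 0. y * D y < 0"
      using beta_density_less_at_right_0[OF ij(1,2) 1, of m] eventually_at_right_less[of 0]
      by eventually_elim (simp add: D_def mult_pos_neg)
    then show ?thesis
      using nonneg_if_decreasing_at_left_endpoint[where a=0 and c=1, OF deriv crit] \<open>Z 1 = 0\<close> x
      by simp
  next
    case 2
    then have "0 \<le> Z 0" using upper_partial_mean_0_le[OF ij] by (simp add: Z_def)
    then show ?thesis
      using nonneg_if_nonneg_at_endpoints_and_critical_points[where a=0 and c=1, OF deriv crit]
        \<open>Z 1 = 0\<close> x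
      by simp
  next
    case 3
    then show ?thesis
      using upper_partial_mean_less_at_some_crossing[OF ij] crossings by (meson not_le)
  qed
  then show ?thesis by (simp add: Z_def)
qed

lemma sorted_nth_le_iff_length_filter:
  fixes xs :: "'a::linorder list"
  assumes "sorted xs" "1 \<le> k" "k \<le> length xs"
  shows "xs ! (k - 1) \<le> x \<longleftrightarrow> k \<le> length (filter (\<lambda>y. y \<le> x) xs)"
  using assms
proof (induction xs arbitrary: k)
  case Nil
  then show ?case by simp
next
  case (Cons a xs)
  have a_le: "\<forall>y\<in>set xs. a \<le> y" using Cons.prems(1) by simp
  show ?case
  proof (cases "a \<le> x")
    case False
    then have "filter (\<lambda>y. y \<le> x) xs = []"
      using a_le by (auto simp: filter_empty_conv)
    moreover have "a \<le> (a # xs) ! (k - 1)"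
      using a_le Cons.prems(2,3) by (cases "k - 1") auto
    ultimately show ?thesis using False Cons.prems(2) by auto
  next
    case True
    show ?thesis
    proof (cases "k = 1")
      case False
      then obtain k' where k': "k = Suc k'" "1 \<le> k'" using Cons.prems by (cases k) auto
      then have "(a # xs) ! (k - 1) = xs ! (k' - 1)" by (cases k') auto
      then show ?thesis using Cons.IH[of k'] Cons.prems k' True by simp
    qed (use True in simp)
  qed
qed

lemma order_stat_le_iff:
  assumes "1 \<le> k" "k \<le> N"
  shows "order_stat k N \<omega> \<le> x \<longleftrightarrow> k \<le> card {l \<in> {..<N}. \<omega> l \<le> x}"
proof -
  let ?xs = "map \<omega> [0..<N]"
  have "order_stat k N \<omega> \<le> x \<longleftrightarrow> k \<le> length (filter (\<lambda>y. y \<le> x) (sort ?xs))"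
    unfolding order_stat_def using assms by (intro sorted_nth_le_iff_length_filter) auto
  also have "length (filter (\<lambda>y. y \<le> x) (sort ?xs)) = length (filter (\<lambda>y. y \<le> x) ?xs)"
    by (metis mset_filter mset_sort size_mset)
  also have "\<dots> = card {l \<in> {..<N}. \<omega> l \<le> x}"
    unfolding length_filter_conv_card by (intro arg_cong[where f=card]) auto
  finally show ?thesis .
qed

lemma sort_map_mono_on:
  fixes g :: "'a::linorder \<Rightarrow> 'b::linorder"
  assumes "mono_on A g" "set xs \<subseteq> A"
  shows "sort (map g xs) = map g (sort xs)"
proof -
  have "sorted_wrt (\<lambda>x y. g x \<le> g y) (sort xs)"
    by (rule sorted_wrt_mono_rel[of _ "(\<le>)"]) (use assms in \<open>auto simp: mono_on_def\<close>)
  then have "sorted (map g (sort xs))" by (simp add: sorted_map)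
  then show ?thesis by (metis mset_map mset_sort properties_for_sort)
qed

lemma order_stat_mono_on:
  assumes "mono_on A g" "\<And>l. l < N \<Longrightarrow> \<omega> l \<in> A" "1 \<le> k" "k \<le> N"
  shows "order_stat k N (\<lambda>l. g (\<omega> l)) = g (order_stat k N \<omega>)"
proof -
  have "sort (map (\<lambda>l. g (\<omega> l)) [0..<N]) = sort (map g (map \<omega> [0..<N]))"
    by (simp add: o_def)
  also have "\<dots> = map g (sort (map \<omega> [0..<N]))"
    using assms by (intro sort_map_mono_on) auto
  finally show ?thesis unfolding order_stat_def using assms by simp
qed

lemma order_stat_cong:
  "(\<And>l. l < N \<Longrightarrow> \<omega> l = \<omega>' l) \<Longrightarrow> order_stat k N \<omega> = order_stat k N \<omega>'"
  unfolding order_stat_def by (metis (mono_tags, lifting) atLeastLessThan_iff map_eq_conv set_upt)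

lemma order_stat_le_eq_Union:
  assumes "1 \<le> k" "k \<le> N"
  shows "{\<omega> \<in> PiE {..<N} (\<lambda>_. A). order_stat k N \<omega> \<le> x}
    = (\<Union>S\<in>{S. S \<subseteq> {..<N} \<and> k \<le> card S}.
         PiE {..<N} (\<lambda>l. if l \<in> S then A \<inter> {..x} else A \<inter> {x<..}))"
    (is "?lhs = (\<Union>S\<in>?subsets. ?box S)")
proof (intro equalityI subsetI)
  fix \<omega> assume \<omega>: "\<omega> \<in> ?lhs"
  define S where "S = {l \<in> {..<N}. \<omega> l \<le> x}"
  have "k \<le> card S" using \<omega> order_stat_le_iff[OF assms] by (simp add: S_def)
  moreover have "\<omega> \<in> ?box S" using \<omega> by (auto simp: S_def PiE_iff)
  moreover have "S \<subseteq> {..<N}" by (auto simp: S_def)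
  ultimately show "\<omega> \<in> (\<Union>S\<in>?subsets. ?box S)" by blast
next
  fix \<omega> assume "\<omega> \<in> (\<Union>S\<in>?subsets. ?box S)"
  then obtain S where S: "S \<subseteq> {..<N}" "k \<le> card S" and \<omega>: "\<omega> \<in> ?box S" by auto
  have "{l \<in> {..<N}. \<omega> l \<le> x} = S"
    using \<omega> S by (auto simp: PiE_iff split: if_splits)
  moreover have "\<omega> \<in> PiE {..<N} (\<lambda>_. A)" using \<omega> by (auto simp: PiE_iff split: if_splits)
  ultimately show "\<omega> \<in> ?lhs" using order_stat_le_iff[OF assms] S by simp
qed

lemma disjoint_family_on_order_stat_boxes:
  fixes A :: "real set" and N :: nat
  shows "disjoint_family_on (\<lambda>S. PiE {..<N} (\<lambda>l. if l \<in> S then A \<inter> {..x} else A \<inter> {x<..}))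
     {S. S \<subseteq> {..<N} \<and> k \<le> card S}"
  unfolding disjoint_family_on_def
proof (intro ballI impI)
  fix S T assume "S \<in> {S. S \<subseteq> {..<N} \<and> k \<le> card S}" "T \<in> {S. S \<subseteq> {..<N} \<and> k \<le> card S}" "S \<noteq> T"
  have "{l \<in> {..<N}. \<omega> l \<le> x} = U"
    if "U \<subseteq> {..<N}" "\<omega> \<in> PiE {..<N} (\<lambda>l. if l \<in> U then A \<inter> {..x} else A \<inter> {x<..})" for U \<omega>
    using that by (auto simp: PiE_iff split: if_splits)
  note box_determines = this
  show "PiE {..<N} (\<lambda>l. if l \<in> S then A \<inter> {..x} else A \<inter> {x<..})
      \<inter> PiE {..<N} (\<lambda>l. if l \<in> T then A \<inter> {..x} else A \<inter> {x<..}) = {}"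
  proof (rule equals0I)
    fix \<omega> assume "\<omega> \<in> PiE {..<N} (\<lambda>l. if l \<in> S then A \<inter> {..x} else A \<inter> {x<..})
      \<inter> PiE {..<N} (\<lambda>l. if l \<in> T then A \<inter> {..x} else A \<inter> {x<..})"
    then have "S = T"
      using box_determines[of S \<omega>] box_determines[of T \<omega>] \<open>S \<in> _\<close> \<open>T \<in> _\<close> by auto
    then show False using \<open>S \<noteq> T\<close> by simp
  qed
qed

lemma order_stat_box_sets:
  fixes M :: "real measure" and N :: nat
  assumes "\<And>x. {..x} \<inter> space M \<in> sets M"
  shows "PiE {..<N} (\<lambda>l. if l \<in> S then space M \<inter> {..x} else space M \<inter> {x<..})
      \<in> sets (PiM {..<N} (\<lambda>_. M))"
proof -
  have "space M \<inter> {x<..} = space M - {..x} \<inter> space M" by auto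
  then have "space M \<inter> {x<..} \<in> sets M" using assms by auto
  then show ?thesis
    using assms by (intro sets_PiM_I_finite) (auto simp: Int_commute)
qed

lemma measurable_order_stat:
  assumes "1 \<le> k" "k \<le> N" "\<And>x. {..x} \<inter> space M \<in> sets M"
  shows "order_stat k N \<in> borel_measurable (PiM {..<N} (\<lambda>_. M))"
proof (rule borel_measurableI_le)
  fix x
  show "{\<omega> \<in> space (PiM {..<N} (\<lambda>_. M)). order_stat k N \<omega> \<le> x} \<in> sets (PiM {..<N} (\<lambda>_. M))"
    unfolding space_PiM order_stat_le_eq_Union[OF assms(1,2)]
    using assms(3) by (intro sets.finite_UN order_stat_box_sets) (auto simp: finite_Collect_subsets)
qed

lemma sum_subsets_card:
  fixes f :: "nat \<Rightarrow> real"
  assumes "finite A"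
  shows "(\<Sum>S\<in>{S. S \<subseteq> A \<and> k \<le> card S}. f (card S)) = (\<Sum>l=k..card A. real (card A choose l) * f l)"
proof -
  let ?SS = "{S. S \<subseteq> A \<and> k \<le> card S}"
  have "(\<Sum>S\<in>?SS. f (card S)) = (\<Sum>l=k..card A. \<Sum>S\<in>{S \<in> ?SS. card S = l}. f (card S))"
    using assms by (intro sum.group[symmetric]) (auto simp: finite_Collect_subsets intro: card_mono)
  also have "\<dots> = (\<Sum>l=k..card A. \<Sum>S\<in>{S. S \<subseteq> A \<and> card S = l}. f l)"
    by (intro sum.cong refl) auto
  also have "\<dots> = (\<Sum>l=k..card A. real (card A choose l) * f l)"
    using n_subsets[OF assms] by simp
  finally show ?thesis .
qed

lemma measure_order_stat_le:
  fixes M :: "real measure"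
  assumes "prob_space M" "1 \<le> k" "k \<le> N" "\<And>x. {..x} \<inter> space M \<in> sets M"
  shows "measure (PiM {..<N} (\<lambda>_. M)) {\<omega> \<in> space (PiM {..<N} (\<lambda>_. M)). order_stat k N \<omega> \<le> x}
    = binomial_tail k N (measure M ({..x} \<inter> space M))"
proof -
  interpret M: prob_space M by fact
  interpret finite_product_prob_space "\<lambda>_. M" "{..<N}" by unfold_locales simp
  define p where "p = measure M ({..x} \<inter> space M)"
  let ?box = "\<lambda>S. PiE {..<N} (\<lambda>l. if l \<in> S then space M \<inter> {..x} else space M \<inter> {x<..})"
  have box: "measure (PiM {..<N} (\<lambda>_. M)) (?box S) = p ^ card S * (1 - p) ^ (N - card S)"
    if "S \<subseteq> {..<N}" for S
  proof -
    have "space M \<inter> {x<..} = space M - {..x} \<inter> space M" by auto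
    then have "measure M (space M \<inter> {x<..}) = 1 - p" "space M \<inter> {x<..} \<in> sets M"
      using assms(4) by (auto simp: M.prob_compl p_def)
    moreover have "measure M (space M \<inter> {..x}) = p" by (simp add: p_def Int_commute)
    ultimately have "measure (PiM {..<N} (\<lambda>_. M)) (?box S) = (\<Prod>l<N. if l \<in> S then p else 1 - p)"
      using assms(4) by (subst finite_measure_PiM_emb) (auto simp: Int_commute intro!: prod.cong)
    also have "\<dots> = p ^ card S * (1 - p) ^ (N - card S)"
      using that by (subst prod.If_cases) (auto simp: Int_absorb1 card_Diff_subset finite_subset
          simp flip: Diff_eq)
    finally show ?thesis .
  qed
  have "measure (PiM {..<N} (\<lambda>_. M)) {\<omega> \<in> space (PiM {..<N} (\<lambda>_. M)). order_stat k N \<omega> \<le> x}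
      = (\<Sum>S\<in>{S. S \<subseteq> {..<N} \<and> k \<le> card S}. measure (PiM {..<N} (\<lambda>_. M)) (?box S))"
    unfolding space_PiM order_stat_le_eq_Union[OF assms(2,3)] using assms(4)
    by (intro finite_measure_finite_Union disjoint_family_on_order_stat_boxes)
      (auto simp: finite_Collect_subsets intro!: order_stat_box_sets)
  also have "\<dots> = (\<Sum>S\<in>{S. S \<subseteq> {..<N} \<and> k \<le> card S}. p ^ card S * (1 - p) ^ (N - card S))"
    by (intro sum.cong refl box) auto
  also have "\<dots> = binomial_tail k N p"
    unfolding binomial_tail_def using sum_subsets_card[of "{..<N}" "\<lambda>l. p ^ l * (1 - p) ^ (N - l)" k]
    by (simp add: mult.assoc)
  finally show ?thesis by (simp add: p_def)
qed

definition unit_uniform :: "real measure" where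
  "unit_uniform = restrict_space lborel {0<..<1}"

lemma space_unit_uniform: "space unit_uniform = {0<..<1}"
  by (simp add: unit_uniform_def)

lemma sets_unit_uniform: "sets unit_uniform = sets (restrict_space borel {0<..<1})"
  unfolding unit_uniform_def by (intro sets_restrict_space_cong) simp

lemma prob_space_unit_uniform: "prob_space unit_uniform"
proof
  show "emeasure unit_uniform (space unit_uniform) = 1"
    unfolding unit_uniform_def by (subst emeasure_restrict_space) auto
qed

lemma atMost_Int_space_unit_uniform: "{..x} \<inter> space unit_uniform \<in> sets unit_uniform"
  unfolding sets_unit_uniform space_unit_uniform by (auto simp: sets_restrict_space_iff)

lemma measure_unit_uniform_atMost:
  "measure unit_uniform ({..x} \<inter> space unit_uniform) = max 0 (min 1 x)"
proof -
  have "measure unit_uniform ({..x} \<inter> space unit_uniform) = measure lborel ({..x} \<inter> {0<..<1})"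
    unfolding unit_uniform_def by (subst measure_restrict_space) auto
  moreover consider "x \<le> 0" | "0 < x" "x < 1" | "1 \<le> x" by linarith
  then have "measure lborel ({..x} \<inter> {0<..<1}) = max 0 (min 1 x)"
  proof cases
    case 1
    then have "{..x} \<inter> {0<..<1} = {}" by auto
    then show ?thesis using 1 by simp
  next
    case 2
    then have "{..x} \<inter> {0<..<1} = {0<..x}" by auto
    then show ?thesis using 2 by simp
  next
    case 3
    then have "{..x} \<inter> {0<..<1} = {0<..<1}" by auto
    then show ?thesis using 3 by simp
  qed
  ultimately show ?thesis by simp
qed

lemma nn_integral_FTC_AE_Icc:
  fixes f F :: "real \<Rightarrow> real"
  assumes "f \<in> borel_measurable borel" "\<And>x. x \<in> {a..b} \<Longrightarrow> (F has_real_derivative f x) (at x)"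
    and "\<And>x. x \<in> {a..b} \<Longrightarrow> 0 \<le> f x" "a \<le> b"
    and "AE x in lborel. x \<in> S \<longleftrightarrow> x \<in> {a..b}"
  shows "(\<integral>\<^sup>+x. ennreal (f x) * indicator S x \<partial>lborel) = ennreal (F b - F a)"
proof -
  have "(\<integral>\<^sup>+x. ennreal (f x) * indicator S x \<partial>lborel) = (\<integral>\<^sup>+x. ennreal (f x) * indicator {a..b} x \<partial>lborel)"
    by (rule nn_integral_cong_AE) (use assms(5) in \<open>auto simp: indicator_def\<close>)
  also have "\<dots> = ennreal (F b - F a)"
    using nn_integral_FTC_Icc[OF assms(1-4)] by simp
  finally show ?thesis .
qed

lemma AE_lborel_not_0_1: "AE p in lborel. p \<noteq> (0::real) \<and> p \<noteq> 1"
  using AE_lborel_singleton[of "0::real"] AE_lborel_singleton[of "1::real"] by eventually_elim auto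

lemma nn_integral_beta_density:
  assumes "1 \<le> k" "k \<le> N" "0 \<le> a" "a \<le> b" "b \<le> 1"
    and "AE p in lborel. p \<in> S \<longleftrightarrow> p \<in> {a..b}"
  shows "(\<integral>\<^sup>+p. ennreal (beta_density k N p) * indicator S p \<partial>lborel)
    = ennreal (binomial_tail k N b - binomial_tail k N a)"
  using assms by (intro nn_integral_FTC_AE_Icc has_real_derivative_binomial_tail beta_density_nonneg) auto

lemma nn_integral_mean_beta_density:
  assumes "1 \<le> k" "k \<le> N" "0 \<le> a" "a \<le> b" "b \<le> 1"
    and "AE p in lborel. p \<in> S \<longleftrightarrow> p \<in> {a..b}"
  shows "(\<integral>\<^sup>+p. ennreal (p * beta_density k N p) * indicator S p \<partial>lborel)
    = ennreal (upper_partial_mean k N a - upper_partial_mean k N b)"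
proof -
  have "((\<lambda>x. - upper_partial_mean k N x) has_real_derivative x * beta_density k N x) (at x)" for x
    using DERIV_minus[OF has_real_derivative_upper_partial_mean[OF assms(1,2)]] by simp
  then show ?thesis
    using assms by (intro nn_integral_FTC_AE_Icc[where F="\<lambda>x. - upper_partial_mean k N x", simplified])
      (auto intro!: mult_nonneg_nonneg beta_density_nonneg)
qed

lemma real_distribution_beta_density:
  assumes "1 \<le> k" "k \<le> N"
  shows "real_distribution (density lborel (\<lambda>p. ennreal (indicator {0<..<1} p * beta_density k N p)))"
proof -
  have "emeasure (density lborel (\<lambda>p. ennreal (indicator {0<..<1} p * beta_density k N p))) UNIV
      = (\<integral>\<^sup>+p. ennreal (beta_density k N p) * indicator {0<..<1} p \<partial>lborel)"
    by (subst emeasure_density) (auto intro!: nn_integral_cong split: split_indicator)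
  also have "\<dots> = ennreal (binomial_tail k N 1 - binomial_tail k N 0)"
    using AE_lborel_not_0_1 by (intro nn_integral_beta_density assms) (auto elim!: AE_mp)
  finally show ?thesis
    using assms by (auto intro!: prob_spaceI simp: real_distribution_def real_distribution_axioms_def
        binomial_tail_0 binomial_tail_1)
qed

lemma measure_beta_density_atMost:
  assumes "1 \<le> k" "k \<le> N"
  shows "measure (density lborel (\<lambda>p. ennreal (indicator {0<..<1} p * beta_density k N p))) {..x}
    = binomial_tail k N (max 0 (min 1 x))"
proof -
  have "emeasure (density lborel (\<lambda>p. ennreal (indicator {0<..<1} p * beta_density k N p))) {..x}
      = (\<integral>\<^sup>+p. ennreal (beta_density k N p) * indicator ({0<..<1} \<inter> {..x}) p \<partial>lborel)"
    by (subst emeasure_density) (auto intro!: nn_integral_cong split: split_indicator)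
  also have "\<dots> = ennreal (binomial_tail k N (max 0 (min 1 x)) - binomial_tail k N 0)"
    using AE_lborel_not_0_1 by (intro nn_integral_beta_density assms) (auto elim!: AE_mp)
  finally show ?thesis
    using binomial_tail_0[OF assms(1)] binomial_tail_nonneg[of "max 0 (min 1 x)" k N]
    by (simp add: measure_def)
qed

lemma order_stat_distr_unit_uniform:
  assumes "1 \<le> k" "k \<le> N"
  shows "order_stat_distr unit_uniform k N
    = density lborel (\<lambda>p. ennreal (indicator {0<..<1} p * beta_density k N p))"
proof -
  have os_meas: "order_stat k N \<in> borel_measurable (PiM {..<N} (\<lambda>_. unit_uniform))"
    using assms atMost_Int_space_unit_uniform by (rule measurable_order_stat)
  have "prob_space (PiM {..<N} (\<lambda>_. unit_uniform))"
    using prob_space_unit_uniform by (intro prob_space_PiM) auto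
  then have os: "real_distribution (order_stat_distr unit_uniform k N)"
    unfolding order_stat_distr_def real_distribution_def real_distribution_axioms_def
    using os_meas by (auto intro: prob_space.prob_space_distr)
  show ?thesis
  proof (rule cdf_unique[OF os real_distribution_beta_density[OF assms]], rule ext)
    fix x
    have "cdf (order_stat_distr unit_uniform k N) x
        = measure (PiM {..<N} (\<lambda>_. unit_uniform))
            {\<omega> \<in> space (PiM {..<N} (\<lambda>_. unit_uniform)). order_stat k N \<omega> \<le> x}"
      unfolding cdf_def order_stat_distr_def using os_meas
      by (subst measure_distr) (auto simp: vimage_def Int_def conj_commute)
    also have "\<dots> = binomial_tail k N (max 0 (min 1 x))"
      using assms prob_space_unit_uniform atMost_Int_space_unit_uniform
      by (simp add: measure_order_stat_le measure_unit_uniform_atMost)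
    finally show "cdf (order_stat_distr unit_uniform k N) x
        = cdf (density lborel (\<lambda>p. ennreal (indicator {0<..<1} p * beta_density k N p))) x"
      unfolding cdf_def using measure_beta_density_atMost[OF assms] by simp
  qed
qed

lemma quantile_cdf_le_iff:
  assumes "real_distribution \<mu>" "0 < p" "p < 1"
  shows "quantile (cdf \<mu>) p \<le> x \<longleftrightarrow> p \<le> cdf \<mu> x"
proof -
  interpret real_distribution \<mu> by fact
  define S where "S = {x. p \<le> cdf \<mu> x}"
  have "\<forall>\<^sub>F x in at_top. p < cdf \<mu> x"
    using order_tendstoD(1)[OF cdf_lim_at_top_prob \<open>p < 1\<close>] .
  then obtain t where "p < cdf \<mu> t" by (auto simp: eventually_at_top_linorder)
  then have "t \<in> S" by (simp add: S_def)
  then have "S \<noteq> {}" by auto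
  have "\<forall>\<^sub>F x in at_bot. cdf \<mu> x < p"
    using order_tendstoD(2)[OF cdf_lim_at_bot \<open>0 < p\<close>] .
  then obtain b where b: "\<And>x. x \<le> b \<Longrightarrow> cdf \<mu> x < p" by (auto simp: eventually_at_bot_linorder)
  have "b \<le> y" if "y \<in> S" for y
    using that b[of y] by (cases "y \<le> b") (auto simp: S_def)
  then have bdd: "bdd_below S" by (auto simp: bdd_below_def)
  have "\<forall>\<^sub>F y in at_right (Inf S). p \<le> cdf \<mu> y"
    unfolding eventually_at_right_field
  proof (intro exI conjI allI impI)
    fix y assume "Inf S < y"
    then obtain s where "s \<in> S" "s < y" using cInf_less_iff[OF \<open>S \<noteq> {}\<close> bdd] by auto
    then show "p \<le> cdf \<mu> y" using cdf_nondecreasing[of s y] by (simp add: S_def)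
  qed (rule less_add_one)
  then have "p \<le> cdf \<mu> (Inf S)"
    using cdf_is_right_cont[of "Inf S"] unfolding continuous_within
    by (intro tendsto_lowerbound) auto
  have "quantile (cdf \<mu>) p = Inf S" by (simp add: quantile_def S_def)
  then show ?thesis
    using \<open>p \<le> cdf \<mu> (Inf S)\<close> cdf_nondecreasing[of "Inf S" x] cInf_lower[OF _ bdd, of x]
    by (auto simp: S_def)
qed

lemma quantile_cdf_mono:
  assumes "real_distribution \<mu>" "0 < p" "p \<le> q" "q < 1"
  shows "quantile (cdf \<mu>) p \<le> quantile (cdf \<mu>) q"
proof -
  have "q \<le> cdf \<mu> (quantile (cdf \<mu>) q)"
    using quantile_cdf_le_iff[OF assms(1), of q "quantile (cdf \<mu>) q"] assms by simp
  then show ?thesis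
    using quantile_cdf_le_iff[OF assms(1), of p "quantile (cdf \<mu>) q"] assms by simp
qed

lemma quantile_cdf_nonneg:
  assumes "real_distribution \<mu>" "\<And>x. x < 0 \<Longrightarrow> cdf \<mu> x = 0" "0 < p" "p < 1"
  shows "0 \<le> quantile (cdf \<mu>) p"
proof (rule ccontr)
  assume "\<not> 0 \<le> quantile (cdf \<mu>) p"
  then have "cdf \<mu> (quantile (cdf \<mu>) p) = 0" using assms(2) by simp
  moreover have "p \<le> cdf \<mu> (quantile (cdf \<mu>) p)"
    using quantile_cdf_le_iff[OF assms(1,3,4), of "quantile (cdf \<mu>) p"] by simp
  ultimately show False using \<open>0 < p\<close> by simp
qed

(* quantile F is only meaningful on (0, 1); it is set to 0 elsewhere to obtain a Borel function on
   the whole line. *)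
definition quantile_on_01 :: "(real \<Rightarrow> real) \<Rightarrow> real \<Rightarrow> real" where
  "quantile_on_01 F p = (if p \<in> {0<..<1} then quantile F p else 0)"

lemma borel_measurable_quantile_on_01:
  assumes "real_distribution \<mu>"
  shows "quantile_on_01 (cdf \<mu>) \<in> borel_measurable borel"
proof -
  have "mono_on {0<..<1} (quantile (cdf \<mu>))"
    using quantile_cdf_mono[OF assms] by (auto intro: mono_onI)
  then have "quantile (cdf \<mu>) \<in> borel_measurable (restrict_space borel {0<..<1})"
    by (rule borel_measurable_mono_on_fnc)
  then have "(\<lambda>p. indicator {0<..<1} p *\<^sub>R quantile (cdf \<mu>) p) \<in> borel_measurable borel"
    by (subst (asm) borel_measurable_restrict_space_iff) auto
  moreover have "(\<lambda>p. indicator {0<..<1} p *\<^sub>R quantile (cdf \<mu>) p) = quantile_on_01 (cdf \<mu>)"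
    by (auto simp: quantile_on_01_def)
  ultimately show ?thesis by simp
qed

lemma measurable_unit_uniform_quantile_on_01:
  "real_distribution \<mu> \<Longrightarrow> quantile_on_01 (cdf \<mu>) \<in> measurable unit_uniform borel"
  unfolding unit_uniform_def
  by (intro measurable_restrict_space1) (simp add: borel_measurable_quantile_on_01)

lemma distr_unit_uniform_quantile_on_01:
  assumes "real_distribution \<mu>"
  shows "distr unit_uniform borel (quantile_on_01 (cdf \<mu>)) = \<mu>"
proof (rule cdf_unique[OF _ assms])
  interpret real_distribution \<mu> by fact
  note Q_meas = measurable_unit_uniform_quantile_on_01[OF assms]
  show "real_distribution (distr unit_uniform borel (quantile_on_01 (cdf \<mu>)))"
    using prob_space.prob_space_distr[OF prob_space_unit_uniform Q_meas]
    by (simp add: real_distribution_def real_distribution_axioms_def)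
  show "cdf (distr unit_uniform borel (quantile_on_01 (cdf \<mu>))) = cdf \<mu>"
  proof
    fix x
    have "quantile_on_01 (cdf \<mu>) -` {..x} \<inter> space unit_uniform = {..cdf \<mu> x} \<inter> space unit_uniform"
      using quantile_cdf_le_iff[OF assms] by (auto simp: space_unit_uniform quantile_on_01_def)
    then show "cdf (distr unit_uniform borel (quantile_on_01 (cdf \<mu>))) x = cdf \<mu> x"
      unfolding cdf_def[of "distr _ _ _"] using Q_meas cdf_nonneg[of x] cdf_bounded_prob[of x]
      by (simp add: measure_distr measure_unit_uniform_atMost)
  qed
qed

lemma sets_order_stat_distr [measurable_cong]: "sets (order_stat_distr M k N) = sets borel"
  by (simp add: order_stat_distr_def)

lemma
  fixes N :: nat
  assumes \<mu>: "real_distribution \<mu>"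
  shows measurable_PiM_quantile_on_01:
      "compose {..<N} (quantile_on_01 (cdf \<mu>))
        \<in> measurable (PiM {..<N} (\<lambda>_. unit_uniform)) (PiM {..<N} (\<lambda>_. \<mu>))"
    and distr_PiM_unit_uniform_quantile_on_01:
      "distr (PiM {..<N} (\<lambda>_. unit_uniform)) (PiM {..<N} (\<lambda>_. \<mu>)) (compose {..<N} (quantile_on_01 (cdf \<mu>)))
        = PiM {..<N} (\<lambda>_. \<mu>)"
proof -
  interpret real_distribution \<mu> by fact
  let ?Q = "quantile_on_01 (cdf \<mu>)"
  have Q_meas: "?Q \<in> measurable unit_uniform \<mu>"
    using measurable_unit_uniform_quantile_on_01[OF \<mu>]
    by (simp add: measurable_cong_sets[OF refl events_eq_borel])
  then show "compose {..<N} ?Q \<in> measurable (PiM {..<N} (\<lambda>_. unit_uniform)) (PiM {..<N} (\<lambda>_. \<mu>))"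
    unfolding compose_def
    by (intro measurable_restrict) (auto intro: measurable_compose[OF measurable_component_singleton])
  have "distr unit_uniform \<mu> ?Q = distr unit_uniform borel ?Q"
    by (rule distr_cong) simp_all
  also have "\<dots> = \<mu>"
    by (rule distr_unit_uniform_quantile_on_01[OF \<mu>])
  finally have "distr unit_uniform \<mu> ?Q = \<mu>" .
  moreover have "distr (PiM {..<N} (\<lambda>_. unit_uniform)) (PiM {..<N} (\<lambda>_. \<mu>)) (compose {..<N} ?Q)
      = PiM {..<N} (\<lambda>_. distr unit_uniform \<mu> ?Q)"
    by (rule distr_PiM_finite_prob_space') (auto intro: prob_space_unit_uniform prob_space_axioms Q_meas)
  ultimately show "distr (PiM {..<N} (\<lambda>_. unit_uniform)) (PiM {..<N} (\<lambda>_. \<mu>)) (compose {..<N} ?Q)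
      = PiM {..<N} (\<lambda>_. \<mu>)"
    by simp
qed

(* Order statistics commute with the monotone map quantile_on_01 (cdf \<mu>) on (0, 1). *)
lemma order_stat_distr_eq_distr_quantile_on_01:
  assumes \<mu>: "real_distribution \<mu>" and k: "1 \<le> k" "k \<le> N"
  shows "order_stat_distr \<mu> k N
    = distr (order_stat_distr unit_uniform k N) borel (quantile_on_01 (cdf \<mu>))"
proof -
  let ?Q = "quantile_on_01 (cdf \<mu>)"
  have os_meas: "order_stat k N \<in> borel_measurable (PiM {..<N} (\<lambda>_. \<mu>))"
    using k by (rule measurable_order_stat) (simp add: real_distribution.events_eq_borel[OF \<mu>])
  have Q_mono: "mono_on {0<..<1} ?Q"
    using quantile_cdf_mono[OF \<mu>] by (auto intro!: mono_onI simp: quantile_on_01_def)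
  have "order_stat_distr \<mu> k N
      = distr (PiM {..<N} (\<lambda>_. unit_uniform)) borel (order_stat k N \<circ> compose {..<N} ?Q)"
    unfolding order_stat_distr_def
    by (subst distr_PiM_unit_uniform_quantile_on_01[OF \<mu>, symmetric])
      (rule distr_distr[OF os_meas measurable_PiM_quantile_on_01[OF \<mu>]])
  also have "\<dots> = distr (PiM {..<N} (\<lambda>_. unit_uniform)) borel (?Q \<circ> order_stat k N)"
  proof (rule distr_cong[OF refl refl])
    fix \<omega> assume \<omega>: "\<omega> \<in> space (PiM {..<N} (\<lambda>_. unit_uniform))"
    have "order_stat k N (compose {..<N} ?Q \<omega>) = order_stat k N (\<lambda>l. ?Q (\<omega> l))"
      by (rule order_stat_cong) (simp add: compose_def)
    also have "\<dots> = ?Q (order_stat k N \<omega>)"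
      by (rule order_stat_mono_on[OF Q_mono _ k]) (use \<omega> in \<open>auto simp: space_PiM space_unit_uniform PiE_iff\<close>)
    finally show "(order_stat k N \<circ> compose {..<N} ?Q) \<omega> = (?Q \<circ> order_stat k N) \<omega>" by simp
  qed
  also have "\<dots> = distr (order_stat_distr unit_uniform k N) borel ?Q"
    unfolding order_stat_distr_def
    by (rule distr_distr[symmetric]) (use k atMost_Int_space_unit_uniform borel_measurable_quantile_on_01[OF \<mu>]
        in \<open>auto intro: measurable_order_stat\<close>)
  finally show ?thesis .
qed

lemma nn_integral_order_stat_distr:
  assumes \<mu>: "real_distribution \<mu>" and k: "1 \<le> k" "k \<le> N"
    and u: "u \<in> borel_measurable borel"
  shows "(\<integral>\<^sup>+y. u y \<partial>order_stat_distr \<mu> k N)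
    = (\<integral>\<^sup>+p. ennreal (indicator {0<..<1} p * beta_density k N p) * u (quantile_on_01 (cdf \<mu>) p) \<partial>lborel)"
proof -
  have "(\<integral>\<^sup>+y. u y \<partial>order_stat_distr \<mu> k N)
      = (\<integral>\<^sup>+p. u (quantile_on_01 (cdf \<mu>) p) \<partial>order_stat_distr unit_uniform k N)"
    unfolding order_stat_distr_eq_distr_quantile_on_01[OF assms(1-3)]
    using u borel_measurable_quantile_on_01[OF \<mu>]
    by (intro nn_integral_distr) (auto simp: measurable_cong_sets[OF sets_order_stat_distr refl])
  then show ?thesis
    unfolding order_stat_distr_unit_uniform[OF k]
    using u borel_measurable_quantile_on_01[OF \<mu>] by (simp add: nn_integral_density)
qed

lemma AE_order_stat_distr_nonneg:
  assumes \<mu>: "real_distribution \<mu>" and "\<And>x. x < 0 \<Longrightarrow> cdf \<mu> x = 0" and k: "1 \<le> k" "k \<le> N"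
  shows "AE y in order_stat_distr \<mu> k N. 0 \<le> y"
  unfolding order_stat_distr_eq_distr_quantile_on_01[OF \<mu> k] using borel_measurable_quantile_on_01[OF \<mu>]
  by (subst AE_distr_iff) (auto simp: quantile_on_01_def intro!: quantile_cdf_nonneg[OF \<mu> assms(2)])

lemma nn_integral_layer_cake:
  fixes f :: "real \<Rightarrow> ennreal" and h :: "real \<Rightarrow> real"
  assumes [measurable]: "f \<in> borel_measurable borel" "h \<in> borel_measurable borel"
    and "\<And>p. 0 \<le> h p"
  shows "(\<integral>\<^sup>+p. f p * ennreal (h p) \<partial>lborel)
    = (\<integral>\<^sup>+t. (\<integral>\<^sup>+p. f p * indicator {p. 0 \<le> t \<and> t < h p} p \<partial>lborel) \<partial>lborel)"
proof -
  have "(\<integral>\<^sup>+p. f p * ennreal (h p) \<partial>lborel)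
      = (\<integral>\<^sup>+p. (\<integral>\<^sup>+t. f p * indicator {p. 0 \<le> t \<and> t < h p} p \<partial>lborel) \<partial>lborel)"
  proof (intro nn_integral_cong)
    fix p
    have "(\<integral>\<^sup>+t. f p * indicator {p. 0 \<le> t \<and> t < h p} p \<partial>lborel)
        = (\<integral>\<^sup>+t. f p * indicator {0..<h p} t \<partial>lborel)"
      by (intro nn_integral_cong) (auto split: split_indicator)
    also have "\<dots> = f p * ennreal (h p)"
      using assms(3)[of p] by (simp add: nn_integral_cmult_indicator)
    finally show "f p * ennreal (h p) = (\<integral>\<^sup>+t. f p * indicator {p. 0 \<le> t \<and> t < h p} p \<partial>lborel)" ..
  qed
  also have "\<dots> = (\<integral>\<^sup>+t. (\<integral>\<^sup>+p. f p * indicator {p. 0 \<le> t \<and> t < h p} p \<partial>lborel) \<partial>lborel)"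
  proof (rule lborel_pair.Fubini'[symmetric])
    have "case_prod (\<lambda>p t. f p * indicator {p. 0 \<le> t \<and> t < h p} p)
        = (\<lambda>x. f (fst x) * (if 0 \<le> snd x \<and> snd x < h (fst x) then 1 else 0))"
      by (auto simp: fun_eq_iff indicator_def)
    then show "case_prod (\<lambda>p t. f p * indicator {p. 0 \<le> t \<and> t < h p} p) \<in> borel_measurable (lborel \<Otimes>\<^sub>M lborel)"
      by simp
  qed
  finally show ?thesis .
qed

lemma nn_integral_mean_beta_density_upper_set:
  assumes k: "1 \<le> k" "k \<le> N" and B: "B \<subseteq> {0<..<1}" "B \<noteq> {}"
    and up: "\<And>p q. p \<in> B \<Longrightarrow> p \<le> q \<Longrightarrow> q < 1 \<Longrightarrow> q \<in> B"
  shows "(\<integral>\<^sup>+p. ennreal (p * beta_density k N p) * indicator B p \<partial>lborel)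
    = ennreal (upper_partial_mean k N (Inf B))"
proof -
  have bdd: "bdd_below B" using B by (auto intro!: bdd_belowI[of _ 0])
  have "0 \<le> Inf B" using B by (intro cInf_greatest) auto
  obtain p0 where "p0 \<in> B" using B by auto
  then have "Inf B \<le> 1" using cInf_lower[OF _ bdd] B by force
  have "AE p in lborel. p \<in> B \<longleftrightarrow> p \<in> {Inf B..1}"
    using AE_lborel_singleton[of "Inf B"] AE_lborel_singleton[of 1]
  proof eventually_elim
    case (elim p)
    show ?case
    proof
      assume "p \<in> {Inf B..1}"
      then have "Inf B < p" using elim by auto
      then obtain q where "q \<in> B" "q < p" using cInf_less_iff[OF B(2) bdd] by auto
      then show "p \<in> B" using up[of q p] \<open>p \<in> {Inf B..1}\<close> elim by auto
    qed (use cInf_lower[OF _ bdd] B in auto)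
  qed
  then show ?thesis
    using nn_integral_mean_beta_density[OF k \<open>0 \<le> Inf B\<close> \<open>Inf B \<le> 1\<close>] upper_partial_mean_1[OF k(2)]
    by simp
qed

(* Layer-cake decomposition of h reduces the comparison to upper level sets of h, on which the
   weighted integrals are the partial means at the infimum. *)
lemma nn_integral_mean_beta_density_mono:
  assumes ij: "1 \<le> i" "i \<le> n" "1 \<le> j" "j \<le> m"
    and le: "\<And>x. 0 \<le> x \<Longrightarrow> x \<le> 1 \<Longrightarrow> upper_partial_mean j m x \<le> upper_partial_mean i n x"
    and [measurable]: "h \<in> borel_measurable borel" and h_nonneg: "\<And>p. 0 \<le> h p"
    and h_mono: "\<And>p q. 0 < p \<Longrightarrow> p \<le> q \<Longrightarrow> q < 1 \<Longrightarrow> h p \<le> h q"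
  shows "(\<integral>\<^sup>+p. ennreal (indicator {0<..<1} p * beta_density j m p * p) * ennreal (h p) \<partial>lborel)
    \<le> (\<integral>\<^sup>+p. ennreal (indicator {0<..<1} p * beta_density i n p * p) * ennreal (h p) \<partial>lborel)"
proof -
  define B where "B t = {p \<in> {0<..<1}. 0 \<le> t \<and> t < h p}" for t
  have level_set: "(\<integral>\<^sup>+p. ennreal (indicator {0<..<1} p * beta_density k N p * p)
        * indicator {p. 0 \<le> t \<and> t < h p} p \<partial>lborel)
      = (\<integral>\<^sup>+p. ennreal (p * beta_density k N p) * indicator (B t) p \<partial>lborel)" for k N t
    by (intro nn_integral_cong) (auto simp: B_def mult.commute split: split_indicator)
  have "(\<integral>\<^sup>+p. ennreal (p * beta_density j m p) * indicator (B t) p \<partial>lborel)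
      \<le> (\<integral>\<^sup>+p. ennreal (p * beta_density i n p) * indicator (B t) p \<partial>lborel)" for t
  proof (cases "B t = {}")
    case False
    have "B t \<subseteq> {0<..<1}" by (auto simp: B_def)
    moreover have up: "q \<in> B t" if "p \<in> B t" "p \<le> q" "q < 1" for p q
      using that h_mono[of p q] by (auto simp: B_def)
    moreover have "0 \<le> Inf (B t)" "Inf (B t) \<le> 1"
      using False \<open>B t \<subseteq> {0<..<1}\<close> cInf_lower[of _ "B t"]
      by (auto intro!: cInf_greatest bdd_belowI[of _ 0] order.trans[OF cInf_lower])
    ultimately show ?thesis
      using False le ij by (simp add: nn_integral_mean_beta_density_upper_set ennreal_leI)
  qed simp
  then show ?thesis
    by (simp add: nn_integral_layer_cake h_nonneg level_set nn_integral_mono)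
qed

lemma star_shaped_quantile_ratio_mono:
  assumes \<mu>: "real_distribution \<mu>" and nonneg: "\<And>x. x < 0 \<Longrightarrow> cdf \<mu> x = 0"
    and dda: "DDA (cdf \<mu>)" and u: "star_shaped_fun u" and pq: "0 < p" "p \<le> q" "q < 1"
  shows "u (quantile (cdf \<mu>) p) / p \<le> u (quantile (cdf \<mu>) q) / q"
proof -
  define Q where "Q = quantile (cdf \<mu>)"
  have u0: "u 0 = 0" and u_nonneg: "\<And>x. 0 \<le> x \<Longrightarrow> 0 \<le> u x"
    and u_star: "\<And>x y. 0 < x \<Longrightarrow> x \<le> y \<Longrightarrow> u x / x \<le> u y / y"
    using u unfolding star_shaped_fun_def by auto
  have "Q p \<le> Q q" "0 \<le> Q p"
    using quantile_cdf_mono[OF \<mu> pq] quantile_cdf_nonneg[OF \<mu> nonneg, of p] pq by (simp_all add: Q_def)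
  show ?thesis
  proof (cases "Q p = 0")
    case True
    then show ?thesis
      using u0 u_nonneg[of "Q q"] \<open>Q p \<le> Q q\<close> pq by (simp add: Q_def)
  next
    case False
    then have "0 < Q p" using \<open>0 \<le> Q p\<close> by simp
    have "u (Q p) / p = (u (Q p) / Q p) * (Q p / p)" using \<open>0 < Q p\<close> by simp
    also have "\<dots> \<le> (u (Q q) / Q q) * (Q q / q)"
    proof (rule mult_mono)
      show "u (Q p) / Q p \<le> u (Q q) / Q q" by (rule u_star[OF \<open>0 < Q p\<close> \<open>Q p \<le> Q q\<close>])
      show "Q p / p \<le> Q q / q" using dda pq unfolding DDA_def Q_def by auto
      show "0 \<le> u (Q q) / Q q" using u_nonneg[of "Q q"] \<open>0 < Q p\<close> \<open>Q p \<le> Q q\<close> by simp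
      show "0 \<le> Q p / p" using \<open>0 < Q p\<close> pq by simp
    qed
    also have "\<dots> = u (Q q) / q" using \<open>0 < Q p\<close> \<open>Q p \<le> Q q\<close> by simp
    finally show ?thesis by (simp add: Q_def)
  qed
qed

lemma nn_integral_star_shaped_order_stat_distr_mono:
  assumes \<mu>: "real_distribution \<mu>" and nonneg: "\<And>x. x < 0 \<Longrightarrow> cdf \<mu> x = 0" and dda: "DDA (cdf \<mu>)"
    and ij: "1 \<le> i" "i \<le> n" "1 \<le> j" "j \<le> m"
    and le: "\<And>x. 0 \<le> x \<Longrightarrow> x \<le> 1 \<Longrightarrow> upper_partial_mean j m x \<le> upper_partial_mean i n x"
    and u: "star_shaped_fun u" and u_meas [measurable]: "u \<in> borel_measurable borel"
  shows "(\<integral>\<^sup>+y. ennreal (u y) \<partial>order_stat_distr \<mu> j m) \<le> (\<integral>\<^sup>+y. ennreal (u y) \<partial>order_stat_distr \<mu> i n)"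
proof -
  let ?Q = "quantile_on_01 (cdf \<mu>)"
  have [measurable]: "?Q \<in> borel_measurable borel" by (rule borel_measurable_quantile_on_01[OF \<mu>])
  have u_nonneg: "0 \<le> u x" if "0 \<le> x" for x using u that by (simp add: star_shaped_fun_def)
  define h where "h p = indicator {0<..<1} p * (u (?Q p) / p)" for p
  have h_nonneg: "0 \<le> h p" for p
    using u_nonneg[OF quantile_cdf_nonneg[OF \<mu> nonneg]] by (simp add: h_def quantile_on_01_def indicator_def)
  have h_mono: "h p \<le> h q" if "0 < p" "p \<le> q" "q < 1" for p q
    using star_shaped_quantile_ratio_mono[OF \<mu> nonneg dda u that] that
    by (simp add: h_def quantile_on_01_def)
  have "ennreal (indicator {0<..<1} p * beta_density k N p) * ennreal (u (?Q p))
      = ennreal (indicator {0<..<1} p * beta_density k N p * p) * ennreal (h p)" for k N p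
  proof (cases "p \<in> {0<..<1}")
    case True
    then have "u (?Q p) = p * h p" "0 \<le> u (?Q p)" "0 \<le> beta_density k N p"
      using u_nonneg[OF quantile_cdf_nonneg[OF \<mu> nonneg]]
      by (auto simp: h_def quantile_on_01_def beta_density_nonneg)
    then show ?thesis
      using True h_nonneg[of p] by (simp add: ennreal_mult[symmetric] mult.assoc)
  qed simp
  note integrand_eq = this
  have "h \<in> borel_measurable borel" unfolding h_def by measurable
  have "(\<integral>\<^sup>+y. ennreal (u y) \<partial>order_stat_distr \<mu> j m)
      = (\<integral>\<^sup>+p. ennreal (indicator {0<..<1} p * beta_density j m p * p) * ennreal (h p) \<partial>lborel)"
    using ij by (simp add: nn_integral_order_stat_distr[OF \<mu>] integrand_eq)
  also have "\<dots> \<le> (\<integral>\<^sup>+p. ennreal (indicator {0<..<1} p * beta_density i n p * p) * ennreal (h p) \<partial>lborel)"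
    by (rule nn_integral_mean_beta_density_mono[OF ij le \<open>h \<in> borel_measurable borel\<close> h_nonneg h_mono])
  also have "\<dots> = (\<integral>\<^sup>+y. ennreal (u y) \<partial>order_stat_distr \<mu> i n)"
    using ij by (simp add: nn_integral_order_stat_distr[OF \<mu>] integrand_eq)
  finally show ?thesis .
qed

lemma ss_ge_order_stat_distr:
  assumes \<mu>: "real_distribution \<mu>" and nonneg: "\<And>x. x < 0 \<Longrightarrow> cdf \<mu> x = 0" and dda: "DDA (cdf \<mu>)"
    and ij: "1 \<le> i" "i \<le> n" "1 \<le> j" "j \<le> m"
    and le: "\<And>x. 0 \<le> x \<Longrightarrow> x \<le> 1 \<Longrightarrow> upper_partial_mean j m x \<le> upper_partial_mean i n x"
  shows "ss_ge (order_stat_distr \<mu> i n) (order_stat_distr \<mu> j m)"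
  unfolding ss_ge_def
proof (intro allI impI, elim conjE)
  fix u assume u: "star_shaped_fun u" and int_i: "integrable (order_stat_distr \<mu> i n) u"
    and int_j: "integrable (order_stat_distr \<mu> j m) u"
  have u_meas: "u \<in> borel_measurable borel"
    using borel_measurable_integrable[OF int_i] by (simp add: measurable_cong_sets[OF sets_order_stat_distr refl])
  have AE_u: "AE y in order_stat_distr \<mu> k N. 0 \<le> u y" if "1 \<le> k" "k \<le> N" for k N
    using AE_order_stat_distr_nonneg[OF \<mu> nonneg that] u
    by (auto simp: star_shaped_fun_def elim!: AE_mp)
  have "ennreal (\<integral>y. u y \<partial>order_stat_distr \<mu> j m) \<le> ennreal (\<integral>y. u y \<partial>order_stat_distr \<mu> i n)"
    using nn_integral_star_shaped_order_stat_distr_mono[OF \<mu> nonneg dda ij le u u_meas]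
    by (simp add: nn_integral_eq_integral[OF int_i AE_u[OF ij(1,2)]]
        nn_integral_eq_integral[OF int_j AE_u[OF ij(3,4)]])
  then show "(\<integral>y. u y \<partial>order_stat_distr \<mu> j m) \<le> (\<integral>y. u y \<partial>order_stat_distr \<mu> i n)"
    using integral_nonneg_AE[OF AE_u[OF ij(1,2)]] by (simp add: ennreal_le_iff)
qed

theorem theorem15:
  fixes M :: "'a measure" and X :: "'a \<Rightarrow> real" and F :: "real \<Rightarrow> real"
    and i n j m :: nat
  assumes "prob_space M"
    and "X \<in> borel_measurable M"
    and "AE \<omega> in M. X \<omega> \<ge> 0"
    and "\<And>x. F x = measure M {\<omega> \<in> space M. X \<omega> \<le> x}"
    and "DDA F"
    and "1 \<le> i" "i \<le> n" "1 \<le> j" "j \<le> m"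
    and "\<forall>r \<in> {x. 0 < x \<and> x < 1 \<and>
            x powr (real i - real j) * (1 - x) powr ((real n - real i) - (real m - real j))
              = Beta (real i) (real n - real i + 1) / Beta (real j) (real m - real j + 1)}.
          real i / real (n + 1) * (1 - F_B (i + 1) (n + 1) r)
          - real j / real (m + 1) * (1 - F_B (j + 1) (m + 1) r) \<ge> 0"
  shows "ss_ge (order_stat_distr (distr M borel X) i n) (order_stat_distr (distr M borel X) j m)"
proof -
  interpret M: prob_space M by fact
  note ij = assms(6-9)
  let ?\<mu> = "distr M borel X"
  have \<mu>: "real_distribution ?\<mu>"
    using M.prob_space_distr[OF assms(2)] by (simp add: real_distribution_def real_distribution_axioms_def)
  have F_cdf: "F x = cdf ?\<mu> x" for x
    using assms(2,4) by (simp add: cdf_def measure_distr vimage_def Int_def conj_commute)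
  have nonneg: "cdf ?\<mu> x = 0" if "x < 0" for x
  proof -
    have "AE \<omega> in M. \<not> X \<omega> \<le> x" using assms(3) by eventually_elim (use that in auto)
    then have "emeasure M {\<omega> \<in> space M. X \<omega> \<le> x} = 0"
      by (subst (asm) AE_iff_measurable[OF _ refl]) (use assms(2) in auto)
    then show ?thesis using assms(4) F_cdf by (simp add: M.emeasure_eq_measure)
  qed
  have "upper_partial_mean j m x \<le> upper_partial_mean i n x" if "0 \<le> x" "x \<le> 1" for x
  proof (rule upper_partial_mean_le_if_le_at_crossings[OF ij _ that])
    fix r assume r: "0 < r" "r < 1" "beta_density i n r = beta_density j m r"
    then show "upper_partial_mean j m r \<le> upper_partial_mean i n r"
      using assms(10) beta_density_eq_iff_Beta_ratio[OF ij r(1,2)] ij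
      by (simp add: upper_partial_mean_def F_B_Suc_eq_binomial_tail)
  qed
  moreover have "DDA (cdf ?\<mu>)" using assms(5) F_cdf by (metis ext)
  ultimately show ?thesis by (intro ss_ge_order_stat_distr[OF \<mu> nonneg _ ij])
qed

end
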